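(* Assume $x_j(0)<\tau$ and $y_j(0)=0$ for all individuals $j$. Then the system is in the no action state if and only if $\sigma_A\max_j\alpha_j-\sigma_S\mu_S\le 0$, i.e. the individual with the largest $\alpha$ satisfies $\sigma_A\alpha_i-\sigma_S\mu_S\le 0$.
   Context: Model: Fix an integer $n\ge 2$ (number of individuals) and parameters $\sigma_A,\sigma_S\ge 0$, $\sigma_C>0$, $\mu_S\in[0,1]$, $\mu_C>0$, $r>0$, $\tau\in(0,1)$, $\alpha_1,\dots,\alpha_n\in(-1,1)$. Individual $i$ has state $(x_i(t),y_i(t))$, $x_i\in(-1,1)$, $y_i\in[0,1]$, and $\gamma_i(t)=\frac{1}{n-1}\sum_{j\neq i}y_j(t)$. Between action events the state evolves by $\dot x_i=[\sigma_A\alpha_i+\sigma_S(\gamma_i-\mu_S)]\,\sigma_C(\gamma_i+\mu_C)(1-x_i)(1+x_i)$, $\dot y_i=-ry_i$. Individual $i$ "acts" at a time $t$ when $x_i(t)$ reaches the threshold $\tau$ (i.e. $x_i(t)\ge\tau$); immediately afterwards $x_i$ is reset to $0$ and $y_i$ is reset to $1$, and the continuous evolution resumes from the new state. The system is in the "no action state" if no individual ever acts. *)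

theory Defs
  imports "HOL-Analysis.Analysis"
begin

definition gam :: "nat \<Rightarrow> (nat \<Rightarrow> real \<Rightarrow> real) \<Rightarrow> nat \<Rightarrow> real \<Rightarrow> real" where
  "gam n y i t = (\<Sum>j\<in>{..<n} - {i}. y j t) / (real n - 1)"

definition flow_trajectory ::
  "nat \<Rightarrow> real \<Rightarrow> real \<Rightarrow> real \<Rightarrow> real \<Rightarrow> real \<Rightarrow> real \<Rightarrow> (nat \<Rightarrow> real)
   \<Rightarrow> (nat \<Rightarrow> real) \<Rightarrow> (nat \<Rightarrow> real)
   \<Rightarrow> (nat \<Rightarrow> real \<Rightarrow> real) \<Rightarrow> (nat \<Rightarrow> real \<Rightarrow> real) \<Rightarrow> bool" where
  "flow_trajectory n \<sigma>A \<sigma>S \<sigma>C \<mu>S \<mu>C r \<alpha> x0 y0 x y \<longleftrightarrow>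
     (\<forall>i<n. x i 0 = x0 i \<and> y i 0 = y0 i \<and>
       (\<forall>t\<ge>0.
          (x i has_real_derivative
             ((\<sigma>A * \<alpha> i + \<sigma>S * (gam n y i t - \<mu>S)) * \<sigma>C * (gam n y i t + \<mu>C)
               * (1 - x i t) * (1 + x i t))) (at t within {0..}) \<and>
          (y i has_real_derivative (- r * y i t)) (at t within {0..})))"

text \<open>Before any action the system follows
  the continuous flow, so no individual ever acts iff the flow trajectory from the
  initial state exists for all times t >= 0 and never reaches the threshold tau.\<close>
definition no_action_state ::
  "nat \<Rightarrow> real \<Rightarrow> real \<Rightarrow> real \<Rightarrow> real \<Rightarrow> real \<Rightarrow> real \<Rightarrow> real \<Rightarrow> (nat \<Rightarrow> real)
   \<Rightarrow> (nat \<Rightarrow> real) \<Rightarrow> (nat \<Rightarrow> real) \<Rightarrow> bool" where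
  "no_action_state n \<sigma>A \<sigma>S \<sigma>C \<mu>S \<mu>C r \<tau> \<alpha> x0 y0 \<longleftrightarrow>
     (\<exists>x y. flow_trajectory n \<sigma>A \<sigma>S \<sigma>C \<mu>S \<mu>C r \<alpha> x0 y0 x y \<and>
            (\<forall>i<n. \<forall>t\<ge>0. x i t < \<tau>))"

end

theory Submission
  imports Defs
begin

text \<open>As long as nobody has acted, every y_j stays 0, so gamma_i vanishes and each x_i solves
  the decoupled logistic equation x' = c_i (1 - x) (1 + x) with
  c_i = (sigma_A alpha_i - sigma_S mu_S) sigma_C mu_C.  Its solution is
  tanh (c_i t + artanh x_i(0)): for c_i \<le> 0 it never exceeds x_i(0) < tau, while for c_i > 0
  the odds (1 + x)/(1 - x) grow like exp (2 c_i t), so x_i reaches every level below 1.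
  Since c_i is nondecreasing in alpha_i, only the individual with the largest alpha matters.\<close>

lemma tanh_artanh_real:
  assumes "-1 < x" "x < (1::real)"
  shows "tanh (artanh x) = x"
proof -
  have "-2 * artanh x = ln (1 - x) - ln (1 + x)"
    using assms by (simp add: artanh_def ln_div)
  then have exp_artanh: "exp (-2 * artanh x) = (1 - x) / (1 + x)"
    using assms by (simp add: exp_diff)
  show ?thesis
    unfolding tanh_real_altdef exp_artanh using assms by (simp add: field_simps)
qed

lemma has_real_derivative_zero_imp_const_nonneg:
  assumes "\<And>t. t \<ge> 0 \<Longrightarrow> (f has_real_derivative 0) (at t within {0..})" and "t \<ge> 0"
  shows "f t = f 0"
proof -
  obtain c where "\<forall>s\<in>{0::real..}. f s = c"
    using has_field_derivative_zero_constant[of "{0..}" f] assms(1) by auto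
  then show ?thesis using assms(2) by simp
qed

lemma linear_ode_zero_init_vanishes:
  assumes "\<And>t. t \<ge> 0 \<Longrightarrow> (y has_real_derivative a * y t) (at t within {0..})"
    and "y 0 = 0" and "t \<ge> 0"
  shows "y t = (0::real)"
proof -
  have "y t * exp (- a * t) = y 0 * exp (- a * 0)"
  proof (rule has_real_derivative_zero_imp_const_nonneg[OF _ \<open>t \<ge> 0\<close>])
    fix s :: real
    assume "s \<ge> 0"
    show "((\<lambda>s. y s * exp (- a * s)) has_real_derivative 0) (at s within {0..})"
      using assms(1)[OF \<open>s \<ge> 0\<close>] by (auto intro!: derivative_eq_intros simp: algebra_simps)
  qed
  then show ?thesis using assms(2) by simp
qed

lemma tanh_logistic_has_derivative:
  fixes c x0 t :: real
  defines "x \<equiv> \<lambda>t. tanh (c * t + artanh x0)"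
  shows "(x has_real_derivative c * (1 - x t) * (1 + x t)) (at t within S)"
proof -
  have "(x has_real_derivative (1 - x t ^ 2) * (c * 1 + 0)) (at t)"
    unfolding x_def by (intro derivative_intros) auto
  moreover have "(1 - x t ^ 2) * (c * 1 + 0) = c * (1 - x t) * (1 + x t)"
    by (simp add: power2_eq_square algebra_simps)
  ultimately show ?thesis
    by (metis has_field_derivative_at_within)
qed

lemma tanh_logistic_le_init:
  fixes c t x0 :: real
  assumes "c \<le> 0" "t \<ge> 0" "-1 < x0" "x0 < 1"
  shows "tanh (c * t + artanh x0) \<le> x0"
proof -
  have "c * t \<le> 0" using assms(1,2) by (simp add: mult_nonpos_nonneg)
  then have "tanh (c * t + artanh x0) \<le> tanh (artanh x0)" by simp
  then show ?thesis using assms(3,4) by (simp add: tanh_artanh_real)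
qed

lemma logistic_odds_exp:
  fixes x :: "real \<Rightarrow> real"
  assumes deriv: "\<And>t. t \<ge> 0 \<Longrightarrow>
      (x has_real_derivative c * (1 - x t) * (1 + x t)) (at t within {0..})"
    and below_one: "\<And>t. t \<ge> 0 \<Longrightarrow> x t < 1" and "t \<ge> 0"
  shows "(1 + x t) / (1 - x t) = (1 + x 0) / (1 - x 0) * exp (2 * c * t)"
proof -
  define odds where "odds s = (1 + x s) / (1 - x s)" for s
  have "odds t * exp (- 2 * c * t) = odds 0 * exp (- 2 * c * 0)"
  proof (rule has_real_derivative_zero_imp_const_nonneg[OF _ \<open>t \<ge> 0\<close>])
    fix s :: real
    assume "s \<ge> 0"
    then have "1 - x s \<noteq> 0" using below_one by force
    with deriv[OF \<open>s \<ge> 0\<close>]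
    show "((\<lambda>s. odds s * exp (- 2 * c * s)) has_real_derivative 0) (at s within {0..})"
      unfolding odds_def by (auto intro!: derivative_eq_intros simp: field_simps)
  qed
  then have "odds t * exp (- 2 * c * t) * exp (2 * c * t) = odds 0 * exp (2 * c * t)"
    by simp
  then show ?thesis by (simp add: odds_def mult.assoc flip: exp_add)
qed

lemma logistic_reaches_level:
  fixes x :: "real \<Rightarrow> real"
  assumes deriv: "\<And>t. t \<ge> 0 \<Longrightarrow>
      (x has_real_derivative c * (1 - x t) * (1 + x t)) (at t within {0..})"
    and "c > 0" and "-1 < x 0" and "\<tau> < 1"
  shows "\<exists>t\<ge>0. \<tau> \<le> x t"
proof (rule ccontr)
  assume "\<not> (\<exists>t\<ge>0. \<tau> \<le> x t)"
  then have below: "x t < \<tau>" if "t \<ge> 0" for t using that by force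
  then have below_one: "x t < 1" if "t \<ge> 0" for t using that assms(4) by force
  define K where "K = (1 + x 0) / (1 - x 0)"
  define M where "M = (1 + \<tau>) / (1 - \<tau>)"
  have "K > 0" using assms(3,4) below[of 0] by (simp add: K_def)
  define t where "t = M / (2 * c * K)"
  have "M \<ge> 0"
    using assms(3,4) below[of 0] by (simp add: M_def)
  then have "t \<ge> 0" using \<open>c > 0\<close> \<open>K > 0\<close> by (simp add: t_def)
  \<comment> \<open>t is chosen so that K (1 + 2 c t) > M, and exp (2 c t) \<ge> 1 + 2 c t\<close>
  have "M < K * (1 + 2 * c * t)"
    using \<open>c > 0\<close> \<open>K > 0\<close> by (simp add: t_def field_simps)
  also have "\<dots> \<le> K * exp (2 * c * t)"
    using \<open>K > 0\<close> exp_ge_add_one_self[of "2 * c * t"] by simp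
  also have "\<dots> = (1 + x t) / (1 - x t)"
    unfolding K_def using logistic_odds_exp[OF deriv below_one \<open>t \<ge> 0\<close>] by simp
  also have "\<dots> < M"
    using below[OF \<open>t \<ge> 0\<close>] assms(4) by (simp add: M_def divide_simps) argo
  finally have "M < M" .
  then show False by simp
qed

definition rate_at_rest ::
  "real \<Rightarrow> real \<Rightarrow> real \<Rightarrow> real \<Rightarrow> real \<Rightarrow> (nat \<Rightarrow> real) \<Rightarrow> nat \<Rightarrow> real" where
  "rate_at_rest \<sigma>A \<sigma>S \<sigma>C \<mu>S \<mu>C \<alpha> i = (\<sigma>A * \<alpha> i - \<sigma>S * \<mu>S) * \<sigma>C * \<mu>C"

lemma flow_trajectoryD:
  assumes "flow_trajectory n \<sigma>A \<sigma>S \<sigma>C \<mu>S \<mu>C r \<alpha> x0 y0 x y" and "i < n"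
  shows "x i 0 = x0 i" and "y i 0 = y0 i"
    and "t \<ge> 0 \<Longrightarrow> (x i has_real_derivative
          (\<sigma>A * \<alpha> i + \<sigma>S * (gam n y i t - \<mu>S)) * \<sigma>C * (gam n y i t + \<mu>C)
            * (1 - x i t) * (1 + x i t)) (at t within {0..})"
    and "t \<ge> 0 \<Longrightarrow> (y i has_real_derivative - r * y i t) (at t within {0..})"
  using assms unfolding flow_trajectory_def by simp_all

lemma flow_trajectory_from_rest_deriv:
  assumes traj: "flow_trajectory n \<sigma>A \<sigma>S \<sigma>C \<mu>S \<mu>C r \<alpha> x0 y0 x y"
    and rest: "\<forall>j<n. y0 j = 0" and "i < n" and "t \<ge> 0"
  shows "(x i has_real_derivative
      rate_at_rest \<sigma>A \<sigma>S \<sigma>C \<mu>S \<mu>C \<alpha> i * (1 - x i t) * (1 + x i t)) (at t within {0..})"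
proof -
  have "y j t = 0" if "j < n" for j
  proof (rule linear_ode_zero_init_vanishes[OF _ _ \<open>t \<ge> 0\<close>])
    show "(y j has_real_derivative - r * y j s) (at s within {0..})" if "s \<ge> 0" for s
      using flow_trajectoryD(4)[OF traj \<open>j < n\<close> that] .
    show "y j 0 = 0"
      using flow_trajectoryD(2)[OF traj \<open>j < n\<close>] rest \<open>j < n\<close> by simp
  qed
  then have "gam n y i t = 0" by (simp add: gam_def)
  with flow_trajectoryD(3)[OF traj \<open>i < n\<close> \<open>t \<ge> 0\<close>] show ?thesis
    by (simp add: rate_at_rest_def)
qed

lemma flow_trajectory_from_rest_tanh:
  assumes "\<forall>j<n. -1 < x0 j \<and> x0 j < 1" and "\<forall>j<n. y0 j = 0"
  shows "flow_trajectory n \<sigma>A \<sigma>S \<sigma>C \<mu>S \<mu>C r \<alpha> x0 y0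
    (\<lambda>i t. tanh (rate_at_rest \<sigma>A \<sigma>S \<sigma>C \<mu>S \<mu>C \<alpha> i * t + artanh (x0 i))) (\<lambda>i t. 0)"
  unfolding flow_trajectory_def
proof (intro allI impI conjI)
  fix i :: nat and t :: real
  let ?c = "rate_at_rest \<sigma>A \<sigma>S \<sigma>C \<mu>S \<mu>C \<alpha> i"
  assume "i < n"
  show "tanh (?c * 0 + artanh (x0 i)) = x0 i"
    using assms(1) \<open>i < n\<close> by (simp add: tanh_artanh_real)
  show "0 = y0 i"
    using assms(2) \<open>i < n\<close> by simp
  show "((\<lambda>t. 0) has_real_derivative - r * 0) (at t within {0..})"
    by simp
  have "gam n (\<lambda>i t. 0) i t = 0" by (simp add: gam_def)
  then have rate: "(\<sigma>A * \<alpha> i + \<sigma>S * (gam n (\<lambda>i t. 0) i t - \<mu>S)) * \<sigma>C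
      * (gam n (\<lambda>i t. 0) i t + \<mu>C) = ?c"
    by (simp add: rate_at_rest_def)
  show "((\<lambda>t. tanh (?c * t + artanh (x0 i))) has_real_derivative
        (\<sigma>A * \<alpha> i + \<sigma>S * (gam n (\<lambda>i t. 0) i t - \<mu>S)) * \<sigma>C * (gam n (\<lambda>i t. 0) i t + \<mu>C)
        * (1 - tanh (?c * t + artanh (x0 i))) * (1 + tanh (?c * t + artanh (x0 i))))
      (at t within {0..})"
    unfolding rate by (rule tanh_logistic_has_derivative)
qed

lemma no_action_state_iff_rates_at_rest_nonpos:
  assumes "\<forall>j<n. -1 < x0 j \<and> x0 j < 1" and "\<forall>j<n. x0 j < \<tau>" and "\<forall>j<n. y0 j = 0"
    and "\<tau> < 1"
  shows "no_action_state n \<sigma>A \<sigma>S \<sigma>C \<mu>S \<mu>C r \<tau> \<alpha> x0 y0 \<longleftrightarrow>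
    (\<forall>i<n. rate_at_rest \<sigma>A \<sigma>S \<sigma>C \<mu>S \<mu>C \<alpha> i \<le> 0)"
proof (intro iffI allI impI)
  let ?c = "rate_at_rest \<sigma>A \<sigma>S \<sigma>C \<mu>S \<mu>C \<alpha>"
  fix i
  assume "no_action_state n \<sigma>A \<sigma>S \<sigma>C \<mu>S \<mu>C r \<tau> \<alpha> x0 y0" and "i < n"
  then obtain x y where traj: "flow_trajectory n \<sigma>A \<sigma>S \<sigma>C \<mu>S \<mu>C r \<alpha> x0 y0 x y"
    and below: "\<forall>t\<ge>0. x i t < \<tau>"
    unfolding no_action_state_def by blast
  show "?c i \<le> 0"
  proof (rule ccontr)
    assume "\<not> ?c i \<le> 0"
    moreover have "x i 0 = x0 i"
      using flow_trajectoryD(1)[OF traj \<open>i < n\<close>] .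
    ultimately have "\<exists>t\<ge>0. \<tau> \<le> x i t"
      using logistic_reaches_level[OF flow_trajectory_from_rest_deriv[OF traj assms(3) \<open>i < n\<close>]]
        assms(1) \<open>i < n\<close> \<open>\<tau> < 1\<close> by simp
    with below show False by (meson not_le)
  qed
next
  let ?c = "rate_at_rest \<sigma>A \<sigma>S \<sigma>C \<mu>S \<mu>C \<alpha>"
  assume rates: "\<forall>i<n. ?c i \<le> 0"
  have "tanh (?c i * t + artanh (x0 i)) < \<tau>" if "i < n" and "t \<ge> 0" for i t
  proof -
    have "tanh (?c i * t + artanh (x0 i)) \<le> x0 i"
      using tanh_logistic_le_init rates assms(1) that by blast
    also have "x0 i < \<tau>" using assms(2) \<open>i < n\<close> by blast
    finally show ?thesis .
  qed
  with flow_trajectory_from_rest_tanh[OF assms(1,3)]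
  show "no_action_state n \<sigma>A \<sigma>S \<sigma>C \<mu>S \<mu>C r \<tau> \<alpha> x0 y0"
    unfolding no_action_state_def by blast
qed

lemma rates_at_rest_nonpos_iff_Max:
  assumes "n > 0" and "\<sigma>A \<ge> 0" and "\<sigma>C > 0" and "\<mu>C > 0"
  shows "(\<forall>i<n. rate_at_rest \<sigma>A \<sigma>S \<sigma>C \<mu>S \<mu>C \<alpha> i \<le> 0) \<longleftrightarrow>
    \<sigma>A * Max (\<alpha> ` {..<n}) - \<sigma>S * \<mu>S \<le> 0"
proof -
  have "Max (\<alpha> ` {..<n}) \<in> \<alpha> ` {..<n}"
    using \<open>n > 0\<close> by (intro Max_in) auto
  then obtain m where "m < n" and m_max: "\<alpha> m = Max (\<alpha> ` {..<n})" by auto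
  have sign: "rate_at_rest \<sigma>A \<sigma>S \<sigma>C \<mu>S \<mu>C \<alpha> i \<le> 0 \<longleftrightarrow> \<sigma>A * \<alpha> i - \<sigma>S * \<mu>S \<le> 0" for i
    using \<open>\<sigma>C > 0\<close> \<open>\<mu>C > 0\<close> by (simp add: rate_at_rest_def mult_le_0_iff)
  have "\<sigma>A * \<alpha> i \<le> \<sigma>A * \<alpha> m" if "i < n" for i
    using that m_max \<open>\<sigma>A \<ge> 0\<close> by (simp add: mult_left_mono)
  with \<open>m < n\<close> show ?thesis unfolding sign m_max[symmetric] by fastforce
qed

theorem corollary4:
  fixes n :: nat and \<sigma>A \<sigma>S \<sigma>C \<mu>S \<mu>C r \<tau> :: real
    and \<alpha> x0 y0 :: "nat \<Rightarrow> real"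
  assumes "n \<ge> 2"
    and "\<sigma>A \<ge> 0" and "\<sigma>S \<ge> 0" and "\<sigma>C > 0"
    and "0 \<le> \<mu>S" and "\<mu>S \<le> 1" and "\<mu>C > 0" and "r > 0"
    and "0 < \<tau>" and "\<tau> < 1"
    and "\<forall>j<n. -1 < \<alpha> j \<and> \<alpha> j < 1"
    and "\<forall>j<n. -1 < x0 j \<and> x0 j < 1"
    and "\<forall>j<n. x0 j < \<tau>"
    and "\<forall>j<n. y0 j = 0"
  shows "no_action_state n \<sigma>A \<sigma>S \<sigma>C \<mu>S \<mu>C r \<tau> \<alpha> x0 y0 \<longleftrightarrow>
         \<sigma>A * Max (\<alpha> ` {..<n}) - \<sigma>S * \<mu>S \<le> 0"
proof -
  have "n > 0" using \<open>n \<ge> 2\<close> by simp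
  with assms(2,4,7,10,12-14) show ?thesis
    by (simp add: no_action_state_iff_rates_at_rest_nonpos rates_at_rest_nonpos_iff_Max)
qed

end
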